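(* Let $\theta\in[0,\pi/2]$, $\nu_1,\nu_2\in[0,1]$ with $\nu_1+\nu_2=1$, and $\rho_s=\nu_1|\psi_1\rangle\langle\psi_1|+\nu_2|\psi_2\rangle\langle\psi_2|$ with $|\psi_1\rangle=\cos\theta|00\rangle+\sin\theta|11\rangle$, $|\psi_2\rangle=\sin\theta|00\rangle-\cos\theta|11\rangle$, and let $\mathcal C=|(\nu_1-\nu_2)\sin2\theta|$ (its concurrence). Then there exist unit vectors $\hat a_1,\hat a_2,\hat a_3\in\mathbb R^3$ and an orthonormal triple $\hat b_1,\hat b_2,\hat b_3\in\mathbb R^3$ such that $\frac13\sum_{k=1}^3\mathrm{Tr}\big[\rho_s\,(\hat a_k\cdot\vec\sigma)\otimes(\hat b_k\cdot\vec\sigma)\big]=\frac{2+\sqrt{1+2\mathcal C^2}}{3\sqrt3},$ which is strictly larger than $\frac1{\sqrt3}$ whenever $\mathcal C>0$.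
   Context: $\vec\sigma=(\sigma_x,\sigma_y,\sigma_z)$ is the vector of Pauli matrices; the first tensor factor is Alice's qubit, the second Bob's; $\{|0\rangle,|1\rangle\}$ is the computational basis. The number $1/\sqrt3$ is the local-hidden-state bound of the 3-setting linear steering inequality. *)

theory Defs
  imports Complex_Main "Jordan_Normal_Form.Matrix"
begin

definition sigma_x :: "complex mat" where
  "sigma_x = mat_of_rows_list 2 [[0, 1], [1, 0]]"
definition sigma_y :: "complex mat" where
  "sigma_y = mat_of_rows_list 2 [[0, -\<i>], [\<i>, 0]]"
definition sigma_z :: "complex mat" where
  "sigma_z = mat_of_rows_list 2 [[1, 0], [0, -1]]"

definition pauli_dot :: "real vec \<Rightarrow> complex mat" where
  "pauli_dot a = complex_of_real (a $ 0) \<cdot>\<^sub>m sigma_x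
              + complex_of_real (a $ 1) \<cdot>\<^sub>m sigma_y
              + complex_of_real (a $ 2) \<cdot>\<^sub>m sigma_z"

(* Kronecker (tensor) product; the first factor is the more significant index *)
definition kron :: "complex mat \<Rightarrow> complex mat \<Rightarrow> complex mat" where
  "kron A B = mat (dim_row A * dim_row B) (dim_col A * dim_col B)
     (\<lambda>(i, j). A $$ (i div dim_row B, j div dim_col B) * B $$ (i mod dim_row B, j mod dim_col B))"

definition proj :: "complex vec \<Rightarrow> complex mat" where
  "proj v = mat (dim_vec v) (dim_vec v) (\<lambda>(i, j). v $ i * cnj (v $ j))"

(* two-qubit kets in basis |00>,|01>,|10>,|11> (Alice first) *)
definition psi1 :: "real \<Rightarrow> complex vec" where
  "psi1 \<theta> = vec_of_list [complex_of_real (cos \<theta>), 0, 0, complex_of_real (sin \<theta>)]"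
definition psi2 :: "real \<Rightarrow> complex vec" where
  "psi2 \<theta> = vec_of_list [complex_of_real (sin \<theta>), 0, 0, - complex_of_real (cos \<theta>)]"

definition rho_s :: "real \<Rightarrow> real \<Rightarrow> real \<Rightarrow> complex mat" where
  "rho_s \<theta> \<nu>1 \<nu>2 = complex_of_real \<nu>1 \<cdot>\<^sub>m proj (psi1 \<theta>) + complex_of_real \<nu>2 \<cdot>\<^sub>m proj (psi2 \<theta>)"

definition concurrence_s :: "real \<Rightarrow> real \<Rightarrow> real \<Rightarrow> real" where
  "concurrence_s \<theta> \<nu>1 \<nu>2 = \<bar>(\<nu>1 - \<nu>2) * sin (2 * \<theta>)\<bar>"

definition mtrace :: "complex mat \<Rightarrow> complex" where
  "mtrace A = (\<Sum>i<dim_row A. A $$ (i, i))"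

definition unit_vec3 :: "real vec \<Rightarrow> bool" where
  "unit_vec3 a \<longleftrightarrow> dim_vec a = 3 \<and> a \<bullet> a = 1"

end

theory Submission imports Defs begin

text \<open>The Pauli correlations of \<open>\<rho>\<^sub>s\<close> form the diagonal matrix \<open>T = diag(t, -t, 1)\<close> with
  \<open>t = (\<nu>1 - \<nu>2) sin 2\<theta>\<close>, so the steering value is \<open>(1/3) \<Sigma>\<^sub>k a\<^sub>k\<^sup>T T b\<^sub>k\<close>. Take the orthonormal
  triple \<open>b\<^sub>k\<close> whose members all have \<open>z\<close>-component \<open>1/\<surd>3\<close>. Choosing \<open>a\<^sub>1 = a\<^sub>2 = e\<^sub>z\<close> contributes
  \<open>1/\<surd>3\<close> twice, and \<open>a\<^sub>3 = T b\<^sub>3 / |T b\<^sub>3|\<close> contributes \<open>|T b\<^sub>3| = \<surd>(1 + 2t\<^sup>2) / \<surd>3\<close>; since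
  \<open>|t|\<close> is the concurrence, this is the claimed value, which exceeds \<open>1/\<surd>3\<close> as soon as \<open>t \<noteq> 0\<close>.\<close>

definition correlation :: "real \<Rightarrow> real vec \<Rightarrow> real vec \<Rightarrow> real" where
  "correlation t a b = a $ 2 * b $ 2 + t * (a $ 0 * b $ 0 - a $ 1 * b $ 1)"

lemma mtrace_mult:
  assumes "A \<in> carrier_mat n m" and "B \<in> carrier_mat m n"
  shows "mtrace (A * B) = (\<Sum>i<n. \<Sum>j<m. A $$ (i, j) * B $$ (j, i))"
  using assms unfolding mtrace_def by (simp add: scalar_prod_def atLeast0LessThan)

lemma pauli_dot_carrier: "pauli_dot a \<in> carrier_mat 2 2"
  unfolding pauli_dot_def sigma_x_def sigma_y_def sigma_z_def by (auto simp: mat_of_rows_list_def)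

lemma pauli_dot_entries:
  "pauli_dot a $$ (0, 0) = a $ 2"
  "pauli_dot a $$ (0, Suc 0) = a $ 0 - \<i> * a $ Suc 0"
  "pauli_dot a $$ (Suc 0, 0) = a $ 0 + \<i> * a $ Suc 0"
  "pauli_dot a $$ (Suc 0, Suc 0) = - a $ 2"
  unfolding pauli_dot_def sigma_x_def sigma_y_def sigma_z_def by (auto simp: mat_of_rows_list_def)

lemma psi_entries:
  "psi1 \<theta> $ 0 = cos \<theta>" "psi1 \<theta> $ Suc 0 = 0" "psi1 \<theta> $ 2 = 0" "psi1 \<theta> $ 3 = sin \<theta>"
  "psi2 \<theta> $ 0 = sin \<theta>" "psi2 \<theta> $ Suc 0 = 0" "psi2 \<theta> $ 2 = 0" "psi2 \<theta> $ 3 = - cos \<theta>"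
  "dim_vec (psi1 \<theta>) = 4" "dim_vec (psi2 \<theta>) = 4"
  unfolding psi1_def psi2_def by (simp_all add: vec_of_list_index del: vec_of_list_Cons)

lemma rho_s_carrier: "rho_s \<theta> \<nu>1 \<nu>2 \<in> carrier_mat 4 4"
  unfolding rho_s_def proj_def psi1_def psi2_def by auto

lemma mtrace_rho_s_pauli:
  assumes "\<nu>1 + \<nu>2 = 1"
  shows "mtrace (rho_s \<theta> \<nu>1 \<nu>2 * kron (pauli_dot a) (pauli_dot b))
    = complex_of_real (correlation ((\<nu>1 - \<nu>2) * sin (2 * \<theta>)) a b)"
proof -
  have kron_carrier: "kron (pauli_dot a) (pauli_dot b) \<in> carrier_mat 4 4"
    using pauli_dot_carrier[of a] pauli_dot_carrier[of b] unfolding kron_def by auto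
  have weights: "\<nu>1 * (cos \<theta>)\<^sup>2 + \<nu>2 * (sin \<theta>)\<^sup>2 + \<nu>1 * (sin \<theta>)\<^sup>2 + \<nu>2 * (cos \<theta>)\<^sup>2 = 1"
  proof -
    have "\<nu>1 * (cos \<theta>)\<^sup>2 + \<nu>2 * (sin \<theta>)\<^sup>2 + \<nu>1 * (sin \<theta>)\<^sup>2 + \<nu>2 * (cos \<theta>)\<^sup>2
        = (\<nu>1 + \<nu>2) * ((sin \<theta>)\<^sup>2 + (cos \<theta>)\<^sup>2)"
      by (simp only: ring_distribs add_ac mult_ac)
    then show ?thesis
      by (simp add: assms)
  qed
  have "mtrace (rho_s \<theta> \<nu>1 \<nu>2 * kron (pauli_dot a) (pauli_dot b))
    = complex_of_real ((\<nu>1 * (cos \<theta>)\<^sup>2 + \<nu>2 * (sin \<theta>)\<^sup>2 + \<nu>1 * (sin \<theta>)\<^sup>2 + \<nu>2 * (cos \<theta>)\<^sup>2)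
        * (a $ 2 * b $ 2) + (\<nu>1 - \<nu>2) * (2 * sin \<theta> * cos \<theta>) * (a $ 0 * b $ 0 - a $ 1 * b $ 1))"
    unfolding mtrace_mult[OF rho_s_carrier kron_carrier]
    using pauli_dot_carrier[of a] pauli_dot_carrier[of b]
    by (simp add: lessThan_nat_numeral kron_def rho_s_def proj_def psi_entries pauli_dot_entries)
      (simp add: algebra_simps power2_eq_square)
  also have "\<dots> = complex_of_real (correlation ((\<nu>1 - \<nu>2) * sin (2 * \<theta>)) a b)"
    unfolding weights sin_double[symmetric] correlation_def by simp
  finally show ?thesis .
qed

lemma vec_of_list3:
  "vec_of_list [x, y, z] $ 0 = x" "vec_of_list [x, y, z] $ Suc 0 = y" "vec_of_list [x, y, z] $ 2 = z"
  "dim_vec (vec_of_list [x, y, z]) = 3"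
  by (simp_all add: vec_of_list_index del: vec_of_list_Cons)

lemma scalar_prod_vec_of_list3:
  "vec_of_list [x1, x2, x3] \<bullet> vec_of_list [y1, y2, y3 :: real] = x1 * y1 + x2 * y2 + x3 * y3"
  by (simp add: scalar_prod_def vec_of_list_index lessThan_nat_numeral atLeast0LessThan)

lemma correlation_steering_witness:
  fixes t :: real
  obtains a b :: "nat \<Rightarrow> real vec" where
    "\<forall>k\<in>{1..3}. unit_vec3 (a k)" and "\<forall>k\<in>{1..3}. dim_vec (b k) = 3"
    and "\<forall>k\<in>{1..3}. \<forall>l\<in>{1..3}. b k \<bullet> b l = (if k = l then 1 else 0)"
    and "(\<Sum>k\<in>{1..3}. correlation t (a k) (b k)) = (2 + sqrt (1 + 2 * t\<^sup>2)) / sqrt 3"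
proof -
  define s where "s = sqrt (1 + 2 * t\<^sup>2)"
  have s_ge_1: "1 \<le> s" and s_sq: "s * s = 1 + 2 * t\<^sup>2" and s_sq_pos: "0 < 1 + 2 * t\<^sup>2"
    unfolding s_def by (simp_all add: add_nonneg_nonneg add_pos_nonneg)
  define a :: "nat \<Rightarrow> real vec" where
    "a k = (if k = 3 then vec_of_list [0, sqrt 2 * t / s, 1 / s] else vec_of_list [0, 0, 1])" for k
  define b :: "nat \<Rightarrow> real vec" where
    "b k = (if k = 1 then vec_of_list [1 / sqrt 2, 1 / sqrt 6, 1 / sqrt 3]
      else if k = 2 then vec_of_list [- 1 / sqrt 2, 1 / sqrt 6, 1 / sqrt 3]
      else vec_of_list [0, - 2 / sqrt 6, 1 / sqrt 3])" for k
  have three: "{1..3::nat} = {1, 2, 3}" by auto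
  have sqrt6: "sqrt 6 = sqrt 2 * sqrt 3" by (simp flip: real_sqrt_mult)
  have "unit_vec3 (a k)" for k
    using s_ge_1 s_sq s_sq_pos
    by (auto simp: unit_vec3_def a_def scalar_prod_vec_of_list3 vec_of_list3 field_simps power2_eq_square)
  moreover have "dim_vec (b k) = 3" for k
    by (simp add: b_def vec_of_list3)
  moreover have "\<forall>k\<in>{1..3}. \<forall>l\<in>{1..3}. b k \<bullet> b l = (if k = l then 1 else 0)"
    unfolding three b_def by (auto simp: scalar_prod_vec_of_list3 sqrt6 field_simps)
  moreover have "correlation t (a 3) (b 3) = s / sqrt 3"
  proof -
    have "correlation t (a 3) (b 3) = (1 + 2 * t\<^sup>2) / (s * sqrt 3)"
      using s_ge_1
      by (simp add: correlation_def a_def b_def vec_of_list3 sqrt6 field_simps power2_eq_square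
          del: vec_of_list_Cons)
    then show ?thesis
      unfolding s_sq[symmetric] using s_ge_1 by simp
  qed
  moreover have "correlation t (a k) (b k) = 1 / sqrt 3" if "k = 1 \<or> k = 2" for k
    using that by (auto simp: correlation_def a_def b_def vec_of_list3 simp del: vec_of_list_Cons)
  ultimately show ?thesis
    using that[of a b] unfolding three s_def by (auto simp: add_divide_distrib)
qed

theorem mainTheorem9:
  fixes \<theta> \<nu>1 \<nu>2 :: real
  assumes "0 \<le> \<theta>" and "\<theta> \<le> pi / 2"
    and "0 \<le> \<nu>1" and "\<nu>1 \<le> 1" and "0 \<le> \<nu>2" and "\<nu>2 \<le> 1"
    and "\<nu>1 + \<nu>2 = 1"
  shows "(\<exists>a b :: nat \<Rightarrow> real vec.
            (\<forall>k\<in>{1..3}. unit_vec3 (a k)) \<and>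
            (\<forall>k\<in>{1..3}. dim_vec (b k) = 3) \<and>
            (\<forall>k\<in>{1..3}. \<forall>l\<in>{1..3}. b k \<bullet> b l = (if k = l then 1 else 0)) \<and>
            (1 / 3) * (\<Sum>k\<in>{1..3::nat}. mtrace (rho_s \<theta> \<nu>1 \<nu>2 * kron (pauli_dot (a k)) (pauli_dot (b k))))
              = complex_of_real ((2 + sqrt (1 + 2 * (concurrence_s \<theta> \<nu>1 \<nu>2)\<^sup>2)) / (3 * sqrt 3)))
         \<and> (concurrence_s \<theta> \<nu>1 \<nu>2 > 0 \<longrightarrow>
              (2 + sqrt (1 + 2 * (concurrence_s \<theta> \<nu>1 \<nu>2)\<^sup>2)) / (3 * sqrt 3) > 1 / sqrt 3)"
proof -
  define t where "t = (\<nu>1 - \<nu>2) * sin (2 * \<theta>)"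
  have concurrence_sq: "(concurrence_s \<theta> \<nu>1 \<nu>2)\<^sup>2 = t\<^sup>2"
    unfolding concurrence_s_def t_def by simp
  obtain a b :: "nat \<Rightarrow> real vec" where frames:
      "\<forall>k\<in>{1..3}. unit_vec3 (a k)" "\<forall>k\<in>{1..3}. dim_vec (b k) = 3"
      "\<forall>k\<in>{1..3}. \<forall>l\<in>{1..3}. b k \<bullet> b l = (if k = l then 1 else 0)"
    and correlation_sum: "(\<Sum>k\<in>{1..3}. correlation t (a k) (b k)) = (2 + sqrt (1 + 2 * t\<^sup>2)) / sqrt 3"
    by (rule correlation_steering_witness)
  have violation: "concurrence_s \<theta> \<nu>1 \<nu>2 > 0 \<longrightarrow>
      (2 + sqrt (1 + 2 * (concurrence_s \<theta> \<nu>1 \<nu>2)\<^sup>2)) / (3 * sqrt 3) > 1 / sqrt 3"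
    by (simp add: field_simps)
  have "(1 / 3) * (\<Sum>k\<in>{1..3::nat}. mtrace (rho_s \<theta> \<nu>1 \<nu>2 * kron (pauli_dot (a k)) (pauli_dot (b k))))
      = complex_of_real ((1 / 3) * (\<Sum>k\<in>{1..3}. correlation t (a k) (b k)))"
    by (simp add: mtrace_rho_s_pauli[OF assms(7)] t_def)
  also have "\<dots> = complex_of_real ((2 + sqrt (1 + 2 * (concurrence_s \<theta> \<nu>1 \<nu>2)\<^sup>2)) / (3 * sqrt 3))"
    unfolding correlation_sum concurrence_sq by simp
  finally show ?thesis
    using frames violation by blast
qed

end
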